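(* Let $B_1,\dots,B_N$ be training bags, $B_i=[B_{i1},\dots,B_{iN_i}]$ with $B_{ij}\in\mathbb{R}^d$, let $\ker$ be a kernel with feature map $\Phi$, and $\nu\in(0,1)$. Let $\lambda$ minimize $\sum_{i=1}^N\|\sum_{j}\lambda_{ij}\Phi(B_{ij})-\frac1N\sum_{k}\sum_{j}\lambda_{kj}\Phi(B_{kj})\|^2$ subject to $\sum_j\lambda_{ij}=1$, $\lambda_{ij}\ge0$; set $b_i=\sum_j\lambda_{ij}\Phi(B_{ij})$. Let $\alpha$ solve $\min_\alpha\frac12\sum_{i,j}\alpha_i\alpha_j\ker(b_i,b_j)$ s.t. $0\le\alpha_i\le\frac1{\nu N}$, $\sum_i\alpha_i=1$, with $\rho$ and $l(x)=\sum_j\alpha_j\sum_k\lambda_{jk}\ker(x,B_{jk})-\rho$ as in one-class SVM. For each $i$ let $s_i=\arg\max_{j=1,\dots,N_i} l(B_{ij})$, and form the $2N$ training points $\{x_1,\dots,x_{2N}\}=\{b_1,\dots,b_N\}\cup\{B_{1s_1},\dots,B_{Ns_N}\}$. Let $\alpha'$ solve $$\min_{\alpha'}\tfrac12\sum_{p,q}\alpha'_p\alpha'_q\ker(x_p,x_q)\quad\text{s.t. } 0\le\alpha'_p\le\frac{1}{2\nu N},\ \sum_p\alpha'_p=1,$$ let $\rho'=\sum_{p=1}^{2N}\alpha'_p\ker(x_p,x_q)$ for an index $q$ with $0<\alpha'_q<\frac{1}{2\nu N}$, let $l'(x)=\sum_{p=1}^{2N}\alpha'_p\ker(x,x_p)-\rho'$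 and $f'(B_i)=\operatorname{sign}(\max_{r=1,\dots,N_i} l'(B_{ir}))$. If $\rho'\neq0$, then $\nu$ is an upper bound on the fraction of outlier bags, i.e. at most $\nu N$ of the training bags are outlier bags.
   Context: $\operatorname{sign}(y)=+1$ if $y\ge0$ and $-1$ otherwise; $\ker(x,y)=\Phi(x)\cdot\Phi(y)$, and kernel values involving virtual instances are expanded linearly, e.g. $\ker(b_i,x)=\sum_k\lambda_{ik}\ker(B_{ik},x)$. In this setting an outlier bag is a training bag $B_i$ that falls outside the decision boundary of the learned function, i.e. with $f'(B_i)=-1$. *)

theory Defs
  imports "HOL-Analysis.Analysis"
begin

definition sign_pm :: "real \<Rightarrow> real" where
  "sign_pm y = (if y \<ge> 0 then 1 else -1)"

definition ocsvm_feasible :: "nat \<Rightarrow> real \<Rightarrow> (nat \<Rightarrow> real) \<Rightarrow> bool" where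
  "ocsvm_feasible M C a \<longleftrightarrow> (\<forall>p<M. 0 \<le> a p \<and> a p \<le> C) \<and> (\<Sum>p<M. a p) = 1"

definition ocsvm_obj :: "nat \<Rightarrow> (nat \<Rightarrow> nat \<Rightarrow> real) \<Rightarrow> (nat \<Rightarrow> real) \<Rightarrow> real" where
  "ocsvm_obj M K a = 1/2 * (\<Sum>p<M. \<Sum>q<M. a p * a q * K p q)"

definition ocsvm_dual_opt :: "nat \<Rightarrow> (nat \<Rightarrow> nat \<Rightarrow> real) \<Rightarrow> real \<Rightarrow> (nat \<Rightarrow> real) \<Rightarrow> bool" where
  "ocsvm_dual_opt M K C a \<longleftrightarrow> ocsvm_feasible M C a \<and>
     (\<forall>a'. ocsvm_feasible M C a' \<longrightarrow> ocsvm_obj M K a \<le> ocsvm_obj M K a')"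

definition bag_weights_feasible :: "nat \<Rightarrow> (nat \<Rightarrow> nat) \<Rightarrow> (nat \<Rightarrow> nat \<Rightarrow> real) \<Rightarrow> bool" where
  "bag_weights_feasible N n lam \<longleftrightarrow>
     (\<forall>i<N. (\<forall>j<n i. 0 \<le> lam i j) \<and> (\<Sum>j<n i. lam i j) = 1)"

definition bag_weights_obj ::
  "nat \<Rightarrow> (nat \<Rightarrow> nat) \<Rightarrow> ('x \<Rightarrow> 'h::real_inner) \<Rightarrow> (nat \<Rightarrow> nat \<Rightarrow> 'x) \<Rightarrow> (nat \<Rightarrow> nat \<Rightarrow> real) \<Rightarrow> real" where
  "bag_weights_obj N n \<Phi> B lam =
     (\<Sum>i<N. (norm ((\<Sum>j<n i. lam i j *\<^sub>R \<Phi> (B i j))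
        - (1 / real N) *\<^sub>R (\<Sum>k<N. \<Sum>j<n k. lam k j *\<^sub>R \<Phi> (B k j))))\<^sup>2)"

definition bag_weights_opt ::
  "nat \<Rightarrow> (nat \<Rightarrow> nat) \<Rightarrow> ('x \<Rightarrow> 'h::real_inner) \<Rightarrow> (nat \<Rightarrow> nat \<Rightarrow> 'x) \<Rightarrow> (nat \<Rightarrow> nat \<Rightarrow> real) \<Rightarrow> bool" where
  "bag_weights_opt N n \<Phi> B lam \<longleftrightarrow> bag_weights_feasible N n lam \<and>
     (\<forall>lam'. bag_weights_feasible N n lam' \<longrightarrow>
        bag_weights_obj N n \<Phi> B lam \<le> bag_weights_obj N n \<Phi> B lam')"

end

theory Submission
  imports Defs
begin

text \<open>
  An outlier bag B_i has l'(B_ir) < 0 for every instance r, so both training points it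
  contributes lie strictly outside the boundary: the instance x_(N+i) = \<Phi>(B_i,s_i) directly,
  and x_i = b_i because l' is affine and b_i is a convex combination of the \<Phi>(B_ir).
  The KKT conditions of the second one-class SVM force \<alpha>'_p = 1/(2\<nu>N) at every point
  with l'(x_p) < 0; as the \<alpha>'_p sum to 1, there are at most 2\<nu>N such points, hence
  at most \<nu>N outlier bags.
\<close>

lemma ocsvm_obj_eq_norm:
  fixes x :: "nat \<Rightarrow> 'h::real_inner"
  shows "ocsvm_obj M (\<lambda>p p'. x p \<bullet> x p') a = 1/2 * (norm (\<Sum>p<M. a p *\<^sub>R x p))\<^sup>2"
  unfolding ocsvm_obj_def power2_norm_eq_inner
  by (simp add: inner_sum_left inner_sum_right sum_distrib_left mult.assoc inner_commute
      mult.left_commute)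

lemma norm_add_scaleR_less:
  fixes w u :: "'a::real_inner"
  assumes descent: "w \<bullet> u < 0" and "0 < \<delta>"
  shows "\<exists>\<epsilon>>0. \<epsilon> \<le> \<delta> \<and> norm (w + \<epsilon> *\<^sub>R u) < norm w"
proof -
  define e where "e = u \<bullet> u"
  have "u \<noteq> 0" using descent by auto
  then have e_pos: "0 < e" by (simp add: e_def)
  define \<epsilon> where "\<epsilon> = min \<delta> (- (w \<bullet> u) / e)"
  have \<epsilon>_pos: "0 < \<epsilon>" using assms e_pos by (simp add: \<epsilon>_def divide_neg_pos)
  have "\<epsilon> * e \<le> - (w \<bullet> u)" using e_pos by (simp add: \<epsilon>_def min_def field_simps)
  then have "\<epsilon> * (2 * (w \<bullet> u) + \<epsilon> * e) < 0"
    using \<epsilon>_pos descent by (intro mult_pos_neg) linarith+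
  then have "(norm (w + \<epsilon> *\<^sub>R u))\<^sup>2 < (norm w)\<^sup>2"
    unfolding power2_norm_eq_inner e_def
    by (simp add: inner_add_left inner_add_right inner_commute algebra_simps)
  then have "norm (w + \<epsilon> *\<^sub>R u) < norm w"
    by (rule power_less_imp_less_base) simp
  moreover have "\<epsilon> \<le> \<delta>" by (simp add: \<epsilon>_def)
  ultimately show ?thesis using \<epsilon>_pos by blast
qed

lemma ocsvm_feasible_transfer:
  assumes "ocsvm_feasible M C a" and "p < M" "q < M" "p \<noteq> q"
    and "0 \<le> \<epsilon>" "\<epsilon> \<le> C - a p" "\<epsilon> \<le> a q"
  shows "ocsvm_feasible M C (\<lambda>j. a j + (if j = p then \<epsilon> else 0) - (if j = q then \<epsilon> else 0))"
  using assms unfolding ocsvm_feasible_def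
  by (auto simp: sum.distrib sum_subtractf)

text \<open>
  Otherwise moving a little weight from q to p stays feasible and decreases the norm of w.
\<close>
lemma ocsvm_dual_opt_at_upper_bound:
  fixes x :: "nat \<Rightarrow> 'h::real_inner" and a :: "nat \<Rightarrow> real" and M :: nat
  defines "w \<equiv> \<Sum>j<M. a j *\<^sub>R x j"
  assumes opt: "ocsvm_dual_opt M (\<lambda>p p'. x p \<bullet> x p') C a"
    and q: "q < M" "0 < a q" and p: "p < M"
    and below: "w \<bullet> x p < w \<bullet> x q"
  shows "a p = C"
proof (rule ccontr)
  assume "a p \<noteq> C"
  have feas: "ocsvm_feasible M C a" using opt by (simp add: ocsvm_dual_opt_def)
  with p \<open>a p \<noteq> C\<close> have "a p < C" by (auto simp: ocsvm_feasible_def)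
  have "p \<noteq> q" using below by auto
  have "w \<bullet> (x p - x q) < 0" using below by (simp add: inner_diff_right)
  then obtain \<epsilon> where \<epsilon>: "0 < \<epsilon>" "\<epsilon> \<le> min (C - a p) (a q)"
    and smaller: "norm (w + \<epsilon> *\<^sub>R (x p - x q)) < norm w"
    using norm_add_scaleR_less[of w "x p - x q" "min (C - a p) (a q)"] \<open>a p < C\<close> q by auto
  define a' where "a' = (\<lambda>j. a j + (if j = p then \<epsilon> else 0) - (if j = q then \<epsilon> else 0))"
  have "ocsvm_feasible M C a'"
    unfolding a'_def using ocsvm_feasible_transfer feas p q \<open>p \<noteq> q\<close> \<epsilon> by simp
  then have "ocsvm_obj M (\<lambda>p p'. x p \<bullet> x p') a \<le> ocsvm_obj M (\<lambda>p p'. x p \<bullet> x p') a'"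
    using opt by (simp add: ocsvm_dual_opt_def)
  moreover have "(\<Sum>j<M. a' j *\<^sub>R x j) = w + \<epsilon> *\<^sub>R (x p - x q)"
    unfolding a'_def w_def using p q(1)
    by (simp add: scaleR_add_left scaleR_diff_left sum.distrib sum_subtractf
        if_distrib[of "\<lambda>c. c *\<^sub>R _"] scaleR_diff_right cong: if_cong)
  ultimately show False
    using smaller by (simp add: ocsvm_obj_eq_norm w_def power_strict_mono)
qed

lemma ocsvm_feasible_card_at_bound:
  assumes feas: "ocsvm_feasible M C a" and T: "T \<subseteq> {..<M}" and at_bound: "\<forall>p\<in>T. a p = C"
  shows "real (card T) * C \<le> 1"
proof -
  have "real (card T) * C = (\<Sum>p\<in>T. a p)" using at_bound by simp
  also have "\<dots> \<le> (\<Sum>p<M. a p)"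
    using feas T by (intro sum_mono2) (auto simp: ocsvm_feasible_def)
  also have "\<dots> = 1" using feas by (simp add: ocsvm_feasible_def)
  finally show ?thesis .
qed

lemma inner_convex_comb_minus:
  assumes "(\<Sum>j\<in>J. c j) = 1"
  shows "(\<Sum>j\<in>J. c j *\<^sub>R y j) \<bullet> w - \<rho> = (\<Sum>j\<in>J. c j * (y j \<bullet> w - \<rho>))"
  using assms by (simp add: inner_sum_left right_diff_distrib sum_subtractf
      flip: sum_distrib_right)

lemma convex_comb_le_bound:
  fixes f :: "'a \<Rightarrow> real"
  assumes "\<forall>j\<in>J. 0 \<le> c j" "(\<Sum>j\<in>J. c j) = 1" "\<forall>j\<in>J. f j \<le> m"
  shows "(\<Sum>j\<in>J. c j * f j) \<le> m"
proof -
  have "(\<Sum>j\<in>J. c j * f j) \<le> (\<Sum>j\<in>J. c j * m)"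
    using assms by (intro sum_mono mult_left_mono) auto
  also have "\<dots> = m" using assms by (simp flip: sum_distrib_right)
  finally show ?thesis .
qed

theorem theorem2:
  fixes N :: nat and n :: "nat \<Rightarrow> nat"
    and B :: "nat \<Rightarrow> nat \<Rightarrow> real ^ 'd"
    and \<Phi> :: "real ^ 'd \<Rightarrow> 'h::real_inner"
    and \<nu> :: real
    and lam :: "nat \<Rightarrow> nat \<Rightarrow> real"
    and b :: "nat \<Rightarrow> 'h"
    and \<alpha> :: "nat \<Rightarrow> real" and q0 :: nat and \<rho> :: real
    and l :: "real ^ 'd \<Rightarrow> real"
    and s :: "nat \<Rightarrow> nat"
    and x :: "nat \<Rightarrow> 'h"
    and \<alpha>' :: "nat \<Rightarrow> real" and q :: nat and \<rho>' :: real
    and l' :: "'h \<Rightarrow> real"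
    and f' :: "nat \<Rightarrow> real"
  assumes N_pos: "N \<ge> 1"
    and bags_nonempty: "\<forall>i<N. n i \<ge> 1"
    and nu: "0 < \<nu>" "\<nu> < 1"
    and lam_opt: "bag_weights_opt N n \<Phi> B lam"
    and b_def: "\<forall>i<N. b i = (\<Sum>j<n i. lam i j *\<^sub>R \<Phi> (B i j))"
    and alpha_opt: "ocsvm_dual_opt N (\<lambda>i j. b i \<bullet> b j) (1 / (\<nu> * real N)) \<alpha>"
    and q0: "q0 < N" "0 < \<alpha> q0" "\<alpha> q0 < 1 / (\<nu> * real N)"
    and rho_def: "\<rho> = (\<Sum>j<N. \<alpha> j * (b j \<bullet> b q0))"
    and l_def: "\<forall>z. l z = (\<Sum>j<N. \<alpha> j * (\<Sum>k<n j. lam j k * (\<Phi> z \<bullet> \<Phi> (B j k)))) - \<rho>"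
    and s_argmax: "\<forall>i<N. s i < n i \<and> (\<forall>j<n i. l (B i j) \<le> l (B i (s i)))"
    and x_bags: "\<forall>p<N. x p = b p"
    and x_inst: "\<forall>i<N. x (N + i) = \<Phi> (B i (s i))"
    and alpha'_opt: "ocsvm_dual_opt (2 * N) (\<lambda>p p'. x p \<bullet> x p') (1 / (2 * \<nu> * real N)) \<alpha>'"
    and q: "q < 2 * N" "0 < \<alpha>' q" "\<alpha>' q < 1 / (2 * \<nu> * real N)"
    and rho'_def: "\<rho>' = (\<Sum>p<2 * N. \<alpha>' p * (x p \<bullet> x q))"
    and l'_def: "\<forall>z. l' z = (\<Sum>p<2 * N. \<alpha>' p * (z \<bullet> x p)) - \<rho>'"
    and f'_def: "\<forall>i<N. f' i = sign_pm (Max ((\<lambda>r. l' (\<Phi> (B i r))) ` {..<n i}))"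
    and rho'_nz: "\<rho>' \<noteq> 0"
  shows "real (card {i. i < N \<and> f' i = -1}) \<le> \<nu> * real N"
proof -
  define C where "C = 1 / (2 * \<nu> * real N)"
  define w where "w = (\<Sum>p<2 * N. \<alpha>' p *\<^sub>R x p)"
  define Ob where "Ob = {i. i < N \<and> f' i = -1}"
  have l'_w: "l' z = z \<bullet> w - \<rho>'" for z
    using l'_def by (simp add: w_def inner_sum_right)
  have rho'_w: "\<rho>' = x q \<bullet> w"
    by (simp add: rho'_def w_def inner_sum_right inner_commute)
  have at_bound: "\<alpha>' p = C" if "p < 2 * N" "l' (x p) < 0" for p
    using ocsvm_dual_opt_at_upper_bound[OF alpha'_opt q(1,2) that(1)] that(2)
    by (simp add: l'_w rho'_w w_def C_def inner_commute)
  have outlier_points: "l' (x i) < 0 \<and> l' (x (N + i)) < 0" if "i \<in> Ob" for i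
  proof -
    have i: "i < N" "f' i = -1" using that by (auto simp: Ob_def)
    let ?m = "Max ((\<lambda>r. l' (\<Phi> (B i r))) ` {..<n i})"
    have inst_le: "\<forall>r<n i. l' (\<Phi> (B i r)) \<le> ?m" by simp
    have "?m < 0" using i f'_def by (auto simp: sign_pm_def split: if_splits)
    moreover have "\<forall>j<n i. 0 \<le> lam i j" "(\<Sum>j<n i. lam i j) = 1"
      using lam_opt i by (auto simp: bag_weights_opt_def bag_weights_feasible_def)
    then have "l' (x i) \<le> ?m"
      using x_bags b_def i inst_le
      by (simp add: l'_w inner_convex_comb_minus convex_comb_le_bound)
    ultimately show ?thesis using x_inst s_argmax i inst_le by (metis le_less_trans)
  qed
  let ?T = "Ob \<union> (+) N ` Ob"
  have "Ob \<subseteq> {..<N}" by (auto simp: Ob_def)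
  then have "card ?T = 2 * card Ob"
    by (subst card_Un_disjoint) (auto simp: card_image finite_subset)
  moreover have "real (card ?T) * C \<le> 1"
    using alpha'_opt \<open>Ob \<subseteq> {..<N}\<close> outlier_points at_bound
    by (intro ocsvm_feasible_card_at_bound[of "2 * N" C \<alpha>']) (auto simp: ocsvm_dual_opt_def C_def)
  ultimately show ?thesis
    using nu N_pos by (simp add: Ob_def C_def field_simps)
qed

end
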